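(* If $G$ is a connected subcubic graph of order $n\geq 6$, then $$C(G)\leq\begin{cases}\frac{7}{12}+\frac{12}{12n}, & \text{if } n\equiv 0 \pmod 4,\\[2pt] \frac{7}{12}+\frac{13}{12n}, & \text{if } n\equiv 1 \pmod 4,\\[2pt] \frac{7}{12}+\frac{14}{12n}, & \text{if } n\equiv 2 \pmod 4,\\[2pt] \frac{7}{12}+\frac{11}{12n}, & \text{if } n\equiv 3 \pmod 4.\end{cases}$$
   Context: All graphs are finite and simple. A graph is subcubic if its maximum degree is at most $3$. For a vertex $u$ of a graph $G$, $N_G(u)$ is its neighborhood, $d_G(u)$ its degree, and $m(G[N_G(u)])$ the number of edges of the subgraph induced by $N_G(u)$. The clustering coefficient of $u$ in $G$ is $C_u(G)=m(G[N_G(u)])/\binom{d_G(u)}{2}$ if $d_G(u)\geq 2$, and $C_u(G)=0$ otherwise. The clustering coefficient of $G$ is $C(G)=\frac{1}{n(G)}\sum_{u\in V(G)}C_u(G)$, where $n(G)$ is the order of $G$. *)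

theory Defs
  imports Main "HOL-Library.Disjoint_Sets" Complex_Main
begin

definition simple_graph :: "'a set \<Rightarrow> 'a set set \<Rightarrow> bool" where
  "simple_graph V E \<longleftrightarrow> finite V \<and> (\<forall>e\<in>E. e \<subseteq> V \<and> card e = 2)"

definition neighbors :: "'a set set \<Rightarrow> 'a \<Rightarrow> 'a set" where
  "neighbors E u = {v. {u, v} \<in> E}"

definition degree :: "'a set set \<Rightarrow> 'a \<Rightarrow> nat" where
  "degree E u = card (neighbors E u)"

definition subcubic :: "'a set \<Rightarrow> 'a set set \<Rightarrow> bool" where
  "subcubic V E \<longleftrightarrow> (\<forall>u\<in>V. degree E u \<le> 3)"

fun walk :: "'a set set \<Rightarrow> 'a list \<Rightarrow> bool" where
  "walk E [] = True"
| "walk E [x] = True"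
| "walk E (x # y # xs) = ({x, y} \<in> E \<and> walk E (y # xs))"

definition connected_graph :: "'a set \<Rightarrow> 'a set set \<Rightarrow> bool" where
  "connected_graph V E \<longleftrightarrow> V \<noteq> {} \<and>
     (\<forall>u\<in>V. \<forall>v\<in>V. \<exists>p. p \<noteq> [] \<and> hd p = u \<and> last p = v \<and> walk E p)"

definition induced_edges :: "'a set set \<Rightarrow> 'a set \<Rightarrow> nat" where
  "induced_edges E S = card {e\<in>E. e \<subseteq> S}"

definition local_clustering :: "'a set set \<Rightarrow> 'a \<Rightarrow> real" where
  "local_clustering E u =
     (if degree E u \<ge> 2
      then real (induced_edges E (neighbors E u)) / real (degree E u choose 2)
      else 0)"

definition clustering :: "'a set \<Rightarrow> 'a set set \<Rightarrow> real" where
  "clustering V E = (\<Sum>u\<in>V. local_clustering E u) / real (card V)"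

end

theory Submission
  imports Defs
begin

text \<open>
  Write \<open>t(u)\<close> for the number of edges inside \<open>N(u)\<close>, i.e. of triangles through \<open>u\<close>, and
  \<open>A\<close> for the set of degree-2 vertices lying on a triangle. In a subcubic graph
  \<open>3 C\<^sub>u\<close> equals \<open>3 t(u)\<close> at degree 2 and \<open>t(u)\<close> at degree 3, and checking the four possible
  degrees gives \<open>12 C\<^sub>u + 7 d(u) \<le> 21 + 4 t(u) + [u \<in> A]\<close>. Summing, with the handshake
  lemma, \<open>12 \<Sum> C\<^sub>u + 14 m \<le> 21 n + 4 T + |A|\<close> where \<open>T = \<Sum> t(u)\<close>.

  Two estimates remove \<open>T\<close> and \<open>|A|\<close>. Every vertex of \<open>A\<close> has a neighbour of degree 3
  (otherwise \<open>G\<close> is a triangle), and a degree-3 vertex \<open>x\<close> is adjacent to at most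
  \<open>2 t(x)\<close> vertices of \<open>A\<close>; hence \<open>3 |A| \<le> 2 T\<close>. Moreover \<open>T \<le> 3 (m - n + 1)\<close>: while
  \<open>G\<close> contains a triangle it has an edge lying on exactly one triangle (the only
  exception being \<open>K\<^sub>4\<close>), and deleting that edge keeps \<open>G\<close> connected and lowers \<open>T\<close> by
  exactly 3; at the end a connected graph still has at least \<open>n - 1\<close> edges. Altogether
  \<open>12 \<Sum> C\<^sub>u \<le> 7 n + 14\<close>, and since \<open>\<Sum> 3 C\<^sub>u\<close> is an integer this rounds down to the
  four residue classes of \<open>n\<close> modulo 4.
\<close>

lemma simple_graph_edgeD:
  assumes "simple_graph V E" "{u, v} \<in> E"
  shows "u \<noteq> v" "u \<in> V" "v \<in> V"
proof -
  have "{u, v} \<subseteq> V" "card {u, v} = 2"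
    using assms unfolding simple_graph_def by auto
  then show "u \<noteq> v" "u \<in> V" "v \<in> V"
    by (auto simp: card_insert_if split: if_splits)
qed

lemma finite_edges: "simple_graph V E \<Longrightarrow> finite E"
  unfolding simple_graph_def by (metis Pow_iff finite_Pow_iff finite_subset subsetI)

lemma simple_graph_subset: "simple_graph V E \<Longrightarrow> E' \<subseteq> E \<Longrightarrow> simple_graph V E'"
  unfolding simple_graph_def by auto

lemma neighbors_sym: "v \<in> neighbors E u \<longleftrightarrow> u \<in> neighbors E v"
  by (simp add: neighbors_def insert_commute)

lemma neighbors_mono: "E' \<subseteq> E \<Longrightarrow> neighbors E' u \<subseteq> neighbors E u"
  unfolding neighbors_def by auto

lemma neighbors_subset: "simple_graph V E \<Longrightarrow> neighbors E u \<subseteq> V"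
  using simple_graph_edgeD(3)[of V E u] by (auto simp: neighbors_def)

lemma finite_neighbors: "simple_graph V E \<Longrightarrow> finite (neighbors E u)"
  using neighbors_subset[of V E u] finite_subset unfolding simple_graph_def by blast

lemma notin_neighbors_self: "simple_graph V E \<Longrightarrow> u \<notin> neighbors E u"
  using simple_graph_edgeD(1)[of V E u u] by (auto simp: neighbors_def)

lemma neighbors_eqI:
  assumes "simple_graph V E" "S \<subseteq> neighbors E u" "degree E u \<le> card S"
  shows "neighbors E u = S"
  using card_seteq[OF finite_neighbors[OF assms(1)] assms(2)] assms(3)
  by (simp add: degree_def)

lemma neighbors_delete_edge:
  "neighbors (E - {{x, y}}) v =
     neighbors E v - (if v = x then {y} else {}) - (if v = y then {x} else {})"
  unfolding neighbors_def by (auto simp: doubleton_eq_iff)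

lemma subcubic_subset:
  assumes "simple_graph V E" "subcubic V E" "E' \<subseteq> E"
  shows "subcubic V E'"
  unfolding subcubic_def degree_def
proof
  fix u assume "u \<in> V"
  have "card (neighbors E' u) \<le> card (neighbors E u)"
    by (rule card_mono[OF finite_neighbors[OF assms(1)] neighbors_mono[OF assms(3)]])
  also have "\<dots> \<le> 3" using assms(2) \<open>u \<in> V\<close> by (simp add: subcubic_def degree_def)
  finally show "card (neighbors E' u) \<le> 3" .
qed

lemma walk_last_in_closed_set:
  assumes "walk E p" "p \<noteq> []" "hd p \<in> S" "\<forall>v\<in>S. neighbors E v \<subseteq> S"
  shows "last p \<in> S"
  using assms
proof (induction E p rule: walk.induct)
  case (3 E x y xs)
  then have "y \<in> S" by (auto simp: neighbors_def)
  with 3 show ?case by auto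
qed auto

lemma connected_graph_closed_set:
  assumes "connected_graph V E" "x \<in> V" "x \<in> S" "\<forall>v\<in>S. neighbors E v \<subseteq> S"
  shows "V \<subseteq> S"
proof
  fix v assume "v \<in> V"
  then obtain p where "p \<noteq> []" "hd p = x" "last p = v" "walk E p"
    using assms(1,2) unfolding connected_graph_def by blast
  with assms(3,4) show "v \<in> S" using walk_last_in_closed_set[of E p S] by auto
qed

text \<open>A walk through the deleted edge \<open>{x, y}\<close> is rerouted through \<open>z\<close>.\<close>

lemma walk_delete_edge:
  assumes "walk E p" "p \<noteq> []" "{x, z} \<in> E - {{x, y}}" "{z, y} \<in> E - {{x, y}}"
  shows "\<exists>q. q \<noteq> [] \<and> hd q = hd p \<and> last q = last p \<and> walk (E - {{x, y}}) q"
  using assms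
proof (induction E p rule: walk.induct)
  case (2 E a)
  then show ?case by (intro exI[of _ "[a]"]) simp
next
  case (3 E a b xs)
  then obtain q where q: "q \<noteq> []" "hd q = b" "last q = last (b # xs)" "walk (E - {{x, y}}) q"
    by auto
  then obtain q' where q': "q = b # q'" by (cases q) auto
  show ?case
  proof (cases "{a, b} = {x, y}")
    case True
    then have "(a = x \<and> b = y) \<or> (a = y \<and> b = x)" by (simp add: doubleton_eq_iff)
    then have "{a, z} \<in> E - {{x, y}} \<and> {z, b} \<in> E - {{x, y}}"
      using "3.prems"(3,4) by (auto simp: insert_commute)
    then show ?thesis using q q' by (intro exI[of _ "a # z # q"]) simp
  next
    case False
    then show ?thesis using q q' "3.prems"(1) by (intro exI[of _ "a # q"]) simp
  qed
qed simp

lemma connected_graph_delete_triangle_edge: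
  assumes "connected_graph V E" "{x, z} \<in> E" "{z, y} \<in> E" "z \<noteq> x" "z \<noteq> y"
  shows "connected_graph V (E - {{x, y}})"
  unfolding connected_graph_def
proof (intro conjI ballI)
  show "V \<noteq> {}" using assms(1) by (simp add: connected_graph_def)
  have xz: "{x, z} \<in> E - {{x, y}}" and zy: "{z, y} \<in> E - {{x, y}}"
    using assms(2-5) by (auto simp: doubleton_eq_iff)
  fix u v assume "u \<in> V" "v \<in> V"
  then obtain p where "p \<noteq> []" "hd p = u" "last p = v" "walk E p"
    using assms(1) unfolding connected_graph_def by blast
  then show "\<exists>q. q \<noteq> [] \<and> hd q = u \<and> last q = v \<and> walk (E - {{x, y}}) q"
    using walk_delete_edge[OF _ _ xz zy] by blast
qed

lemma connected_graph_descending_neighbor: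
  assumes "connected_graph V E" "r \<in> V"
  obtains d :: "'a \<Rightarrow> nat" where "\<And>v. v \<in> V - {r} \<Longrightarrow> \<exists>u. {v, u} \<in> E \<and> d u < d v"
proof -
  define reaches_in where
    "reaches_in v k \<longleftrightarrow> (\<exists>p. length p = k \<and> walk E (v # p) \<and> last (v # p) = r)" for v k
  define d where "d v = (LEAST k. reaches_in v k)" for v
  have "\<exists>u. {v, u} \<in> E \<and> d u < d v" if v: "v \<in> V - {r}" for v
  proof -
    obtain p where "p \<noteq> []" "hd p = v" "last p = r" "walk E p"
      using assms v unfolding connected_graph_def by blast
    then obtain p' where "p = v # p'" by (cases p) auto
    then have "reaches_in v (length p')"
      unfolding reaches_in_def using \<open>last p = r\<close> \<open>walk E p\<close> by blast
    then have "reaches_in v (d v)" unfolding d_def by (rule LeastI)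
    then obtain p where p: "length p = d v" "walk E (v # p)" "last (v # p) = r"
      unfolding reaches_in_def by blast
    then obtain b q where bq: "p = b # q" using v by (cases p) simp_all
    have "reaches_in b (length q)" unfolding reaches_in_def using p bq by (intro exI[of _ q]) auto
    then have "d b \<le> length q" unfolding d_def by (rule Least_le)
    then have "d b < d v" using p(1) bq by simp
    moreover have "{v, b} \<in> E" using p(2) bq by simp
    ultimately show ?thesis by blast
  qed
  then show thesis by (rule that)
qed

text \<open>Sending every vertex other than the root \<open>r\<close> to an edge towards a neighbour closer to
  \<open>r\<close> is injective.\<close>

lemma card_le_Suc_card_edges:
  assumes sg: "simple_graph V E" and conn: "connected_graph V E"
  shows "card V \<le> Suc (card E)"
proof -
  obtain r where r: "r \<in> V" using conn unfolding connected_graph_def by blast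
  obtain d :: "'a \<Rightarrow> nat" where d: "\<And>v. v \<in> V - {r} \<Longrightarrow> \<exists>u. {v, u} \<in> E \<and> d u < d v"
    using connected_graph_descending_neighbor[OF conn r] by blast
  define parent where "parent v = (SOME u. {v, u} \<in> E \<and> d u < d v)" for v
  have parent: "{v, parent v} \<in> E \<and> d (parent v) < d v" if "v \<in> V - {r}" for v
    unfolding parent_def using d[OF that] by (rule someI_ex)
  have "inj_on (\<lambda>v. {v, parent v}) (V - {r})"
  proof (rule inj_onI)
    fix v w assume vw: "v \<in> V - {r}" "w \<in> V - {r}" "{v, parent v} = {w, parent w}"
    show "v = w"
    proof (rule ccontr)
      assume "v \<noteq> w"
      then have "v = parent w" "w = parent v" using vw(3) by (auto simp: doubleton_eq_iff)
      then show False using parent[OF vw(1)] parent[OF vw(2)] by simp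
    qed
  qed
  moreover have "(\<lambda>v. {v, parent v}) ` (V - {r}) \<subseteq> E" using parent by auto
  ultimately have "card (V - {r}) \<le> card E"
    using card_inj_on_le finite_edges[OF sg] by blast
  then show ?thesis using r sg unfolding simple_graph_def by auto
qed

definition triangles_at :: "'a set set \<Rightarrow> 'a \<Rightarrow> nat" where
  "triangles_at E u = induced_edges E (neighbors E u)"

lemma triangles_at_delete_edge_endpoint:
  assumes sg: "simple_graph V E" and e: "{x, y} \<in> E"
    and common: "neighbors E x \<inter> neighbors E y = {z}"
  shows "triangles_at E x = Suc (triangles_at (E - {{x, y}}) x)"
proof -
  have "x \<noteq> y" using simple_graph_edgeD[OF sg e] by auto
  then have N: "neighbors (E - {{x, y}}) x = neighbors E x - {y}"
    by (simp add: neighbors_delete_edge)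
  have z: "z \<in> neighbors E x" "{y, z} \<in> E" using common by (auto simp: neighbors_def)
  have y: "y \<in> neighbors E x" using e by (simp add: neighbors_def)
  let ?B = "{f \<in> E - {{x, y}}. f \<subseteq> neighbors E x - {y}}"
  have "{f \<in> E. f \<subseteq> neighbors E x} \<subseteq> insert {y, z} ?B"
  proof
    fix f assume f: "f \<in> {f \<in> E. f \<subseteq> neighbors E x}"
    show "f \<in> insert {y, z} ?B"
    proof (cases "y \<in> f")
      case True
      have "card f = 2" using f sg unfolding simple_graph_def by auto
      then obtain a b where "f = {a, b}" by (meson card_2_iff)
      then obtain w where w: "f = {y, w}" using True by auto
      then have "w \<in> neighbors E x \<inter> neighbors E y" using f by (auto simp: neighbors_def)
      then show ?thesis using w common by auto
    qed (use f in auto)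
  qed
  then have "{f \<in> E. f \<subseteq> neighbors E x} = insert {y, z} ?B" using z y by auto
  moreover have "finite ?B" using finite_edges[OF sg] by auto
  ultimately show ?thesis unfolding triangles_at_def induced_edges_def N by simp
qed

text \<open>Deleting an edge \<open>xy\<close> that lies on a single triangle \<open>xyz\<close> destroys that triangle only.\<close>

lemma triangles_at_delete_edge:
  assumes sg: "simple_graph V E" and e: "{x, y} \<in> E"
    and common: "neighbors E x \<inter> neighbors E y = {z}"
  shows "triangles_at E v = triangles_at (E - {{x, y}}) v + (if v \<in> {x, y, z} then 1 else 0)"
proof -
  have zx: "z \<in> neighbors E x" and zy: "z \<in> neighbors E y" using common by auto
  then have "z \<noteq> x" "z \<noteq> y" using notin_neighbors_self[OF sg] by auto
  consider "v = x" | "v = y" | "v = z" | "v \<notin> {x, y, z}" by auto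
  then show ?thesis
  proof cases
    case 1
    then show ?thesis using triangles_at_delete_edge_endpoint[OF sg e common] by simp
  next
    case 2
    have "{y, x} \<in> E" "neighbors E y \<inter> neighbors E x = {z}"
      using common e by (auto simp: insert_commute)
    then have "triangles_at E y = Suc (triangles_at (E - {{y, x}}) y)"
      by (rule triangles_at_delete_edge_endpoint[OF sg])
    then show ?thesis using 2 by (simp add: insert_commute)
  next
    case 3
    have N: "neighbors (E - {{x, y}}) z = neighbors E z"
      using \<open>z \<noteq> x\<close> \<open>z \<noteq> y\<close> by (simp add: neighbors_delete_edge)
    have "{x, y} \<subseteq> neighbors E z" using zx zy neighbors_sym by fast
    then have "{f \<in> E. f \<subseteq> neighbors E z} = insert {x, y} {f \<in> E - {{x, y}}. f \<subseteq> neighbors E z}"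
      using e by auto
    moreover have "finite {f \<in> E - {{x, y}}. f \<subseteq> neighbors E z}" using finite_edges[OF sg] by auto
    ultimately show ?thesis unfolding 3 triangles_at_def induced_edges_def N by simp
  next
    case 4
    then have N: "neighbors (E - {{x, y}}) v = neighbors E v" by (simp add: neighbors_delete_edge)
    have "\<not> {x, y} \<subseteq> neighbors E v"
      using common 4 neighbors_sym[of x E v] neighbors_sym[of y E v] by auto
    then have "{f \<in> E. f \<subseteq> neighbors E v} = {f \<in> E - {{x, y}}. f \<subseteq> neighbors E v}" by auto
    then show ?thesis using 4 unfolding triangles_at_def induced_edges_def N by simp
  qed
qed

lemma sum_triangles_at_delete_edge:
  assumes sg: "simple_graph V E" and e: "{x, y} \<in> E"
    and common: "neighbors E x \<inter> neighbors E y = {z}"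
  shows "(\<Sum>v\<in>V. triangles_at E v) = (\<Sum>v\<in>V. triangles_at (E - {{x, y}}) v) + 3"
proof -
  have "x \<noteq> y" "x \<in> V" "y \<in> V" using simple_graph_edgeD[OF sg e] by auto
  moreover have "z \<in> neighbors E x" "z \<in> neighbors E y" using common by auto
  then have "z \<noteq> x" "z \<noteq> y" "z \<in> V"
    using notin_neighbors_self[OF sg] neighbors_subset[OF sg] by auto
  ultimately have "{v \<in> V. v \<in> {x, y, z}} = {x, y, z}" "card {x, y, z} = 3" by auto
  moreover have "finite V" using sg unfolding simple_graph_def by simp
  ultimately show ?thesis
    by (simp add: triangles_at_delete_edge[OF sg e common] sum.distrib sum.inter_filter[symmetric])
qed

text \<open>If every edge of a triangle \<open>xyz\<close> had a second apex, subcubicity would force a \<open>K\<^sub>4\<close>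
  on \<open>{x, y, z, w}\<close>, closed under neighbourhoods and hence all of \<open>V\<close>.\<close>

lemma exists_edge_on_unique_triangle:
  assumes sg: "simple_graph V E" and sc: "subcubic V E" and conn: "connected_graph V E"
    and n: "card V \<ge> 5" and xy: "{x, y} \<in> E" and yz: "{y, z} \<in> E" and xz: "{x, z} \<in> E"
  shows "\<exists>a b c. {a, b} \<in> E \<and> neighbors E a \<inter> neighbors E b = {c}"
proof (rule ccontr)
  assume none: "\<not> ?thesis"
  have d: "x \<noteq> y" "y \<noteq> z" "x \<noteq> z" "x \<in> V" "y \<in> V" "z \<in> V"
    using simple_graph_edgeD[OF sg xy] simple_graph_edgeD[OF sg yz] simple_graph_edgeD[OF sg xz] by auto
  have z: "z \<in> neighbors E x \<inter> neighbors E y" and y: "y \<in> neighbors E x \<inter> neighbors E z"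
    using xy yz xz by (auto simp: neighbors_def insert_commute)
  obtain w where w: "w \<in> neighbors E x" "w \<in> neighbors E y" "w \<noteq> z"
    using none xy z by blast
  obtain w' where w': "w' \<in> neighbors E x" "w' \<in> neighbors E z" "w' \<noteq> y"
    using none xz y by blast
  have wV: "w \<in> V" using w neighbors_subset[OF sg] by auto
  have "w \<noteq> x" "w \<noteq> y" "w' \<noteq> z" using w w' notin_neighbors_self[OF sg] neighbors_sym by metis+
  then have card3: "card {y, z, w} = 3" "card {x, z, w} = 3" "card {x, y, w} = 3" "card {x, y, z} = 3"
    using d w(3) by auto
  have deg: "degree E v \<le> 3" if "v \<in> V" for v using sc that by (simp add: subcubic_def)
  have Nx: "neighbors E x = {y, z, w}"
    using w y z card3 deg[OF d(4)] by (intro neighbors_eqI[OF sg]) auto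
  then have "w' = w" using w' \<open>w' \<noteq> z\<close> by auto
  have adj: "x \<in> neighbors E y" "x \<in> neighbors E z" "y \<in> neighbors E z"
    "x \<in> neighbors E w" "y \<in> neighbors E w" "z \<in> neighbors E w"
    using y z w w' \<open>w' = w\<close> neighbors_sym by fast+
  have Ny: "neighbors E y = {x, z, w}"
    using adj z w card3 deg[OF d(5)] by (intro neighbors_eqI[OF sg]) auto
  have Nz: "neighbors E z = {x, y, w}"
    using adj w' \<open>w' = w\<close> card3 deg[OF d(6)] neighbors_sym by (intro neighbors_eqI[OF sg]) auto
  have Nw: "neighbors E w = {x, y, z}"
    using adj card3 deg[OF wV] by (intro neighbors_eqI[OF sg]) auto
  have "V \<subseteq> {x, y, z, w}"
    using Nx Ny Nz Nw by (intro connected_graph_closed_set[OF conn d(4)]) auto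
  then have "card V \<le> card {x, y, z, w}" by (simp add: card_mono)
  also have "\<dots> \<le> 4" by (simp add: card_insert_if)
  finally show False using n by simp
qed

lemma sum_triangles_at_le:
  assumes "simple_graph V E" "subcubic V E" "connected_graph V E" "card V \<ge> 5"
  shows "3 * card V + (\<Sum>v\<in>V. triangles_at E v) \<le> 3 * card E + 3"
  using assms
proof (induction "card E" arbitrary: E rule: less_induct)
  case less
  note sg = less.prems(1) and sc = less.prems(2) and conn = less.prems(3)
  show ?case
  proof (cases "\<exists>u\<in>V. triangles_at E u \<noteq> 0")
    case False
    then show ?thesis using card_le_Suc_card_edges[OF sg conn] by simp
  next
    case True
    then obtain u where "triangles_at E u \<noteq> 0" by blast
    then have "{f \<in> E. f \<subseteq> neighbors E u} \<noteq> {}"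
      unfolding triangles_at_def induced_edges_def by (metis card.empty)
    then obtain f where f: "f \<in> E" "f \<subseteq> neighbors E u" by blast
    then have "card f = 2" using sg unfolding simple_graph_def by auto
    then obtain a b where ab: "f = {a, b}" by (meson card_2_iff)
    have "{u, a} \<in> E" "{a, b} \<in> E" "{u, b} \<in> E" using f ab by (auto simp: neighbors_def)
    then obtain x y z where xy: "{x, y} \<in> E" and common: "neighbors E x \<inter> neighbors E y = {z}"
      using exists_edge_on_unique_triangle[OF sg sc conn less.prems(4)] by blast
    let ?E = "E - {{x, y}}"
    have "z \<in> neighbors E x" "z \<in> neighbors E y" using common by auto
    then have "{x, z} \<in> E" "{z, y} \<in> E" "z \<noteq> x" "z \<noteq> y"
      using notin_neighbors_self[OF sg] neighbors_sym by (fastforce simp: neighbors_def)+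
    then have "connected_graph V ?E" by (rule connected_graph_delete_triangle_edge[OF conn])
    moreover have "card ?E < card E" using finite_edges[OF sg] xy by (rule card_Diff1_less)
    moreover have "simple_graph V ?E" "subcubic V ?E"
      using simple_graph_subset[OF sg] subcubic_subset[OF sg sc] by auto
    ultimately have "3 * card V + (\<Sum>v\<in>V. triangles_at ?E v) \<le> 3 * card ?E + 3"
      using less.hyps less.prems(4) by blast
    moreover have "card ?E + 1 = card E"
      using card_Diff_singleton[OF xy] card_gt_0_iff[of E] finite_edges[OF sg] xy by auto
    ultimately show ?thesis using sum_triangles_at_delete_edge[OF sg xy common] by linarith
  qed
qed

lemma sum_degree_eq_twice_card_edges:
  assumes sg: "simple_graph V E"
  shows "(\<Sum>u\<in>V. degree E u) = 2 * card E"
proof -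
  have finV: "finite V" using sg unfolding simple_graph_def by simp
  define ends where "ends e = {(a, b). e = {a, b}}" for e :: "'a set"
  have ends: "finite (ends e)" "card (ends e) = 2" if "e \<in> E" for e
  proof -
    have "card e = 2" using that sg unfolding simple_graph_def by auto
    then obtain a b where ab: "e = {a, b}" "a \<noteq> b" by (meson card_2_iff)
    then have "ends e = {(a, b), (b, a)}" unfolding ends_def by (auto simp: doubleton_eq_iff)
    with ab(2) show "finite (ends e)" "card (ends e) = 2" by simp_all
  qed
  have "(SIGMA u:V. neighbors E u) = (\<Union>e\<in>E. ends e)"
  proof (intro set_eqI iffI)
    fix p assume "p \<in> (SIGMA u:V. neighbors E u)"
    then show "p \<in> (\<Union>e\<in>E. ends e)" by (auto simp: neighbors_def ends_def)
  next
    fix p assume "p \<in> (\<Union>e\<in>E. ends e)"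
    then obtain a b where "p = (a, b)" "{a, b} \<in> E" unfolding ends_def by auto
    then show "p \<in> (SIGMA u:V. neighbors E u)"
      using simple_graph_edgeD(2)[OF sg] by (auto simp: neighbors_def)
  qed
  moreover have "card (\<Union>e\<in>E. ends e) = (\<Sum>e\<in>E. card (ends e))"
  proof (rule card_UN_disjoint[OF finite_edges[OF sg]])
    show "\<forall>e\<in>E. finite (ends e)" using ends(1) by simp
    show "\<forall>e\<in>E. \<forall>e'\<in>E. e \<noteq> e' \<longrightarrow> ends e \<inter> ends e' = {}" unfolding ends_def by auto
  qed
  ultimately show ?thesis
    unfolding degree_def using finV finite_neighbors[OF sg] ends(2)
    by (simp add: card_SigmaI[symmetric])
qed

lemma triangles_at_le_choose:
  assumes "simple_graph V E"
  shows "triangles_at E u \<le> degree E u choose 2"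
proof -
  have "{f \<in> E. f \<subseteq> neighbors E u} \<subseteq> {B. B \<subseteq> neighbors E u \<and> card B = 2}"
    using assms unfolding simple_graph_def by auto
  then have "card {f \<in> E. f \<subseteq> neighbors E u} \<le> card {B. B \<subseteq> neighbors E u \<and> card B = 2}"
    using finite_neighbors[OF assms] by (intro card_mono) auto
  then show ?thesis
    unfolding triangles_at_def induced_edges_def degree_def
    using n_subsets[OF finite_neighbors[OF assms]] by simp
qed

lemma degree_two_triangle_edge:
  assumes sg: "simple_graph V E" and N: "neighbors E u = {a, b}" and "a \<noteq> b"
    and "triangles_at E u = 1"
  shows "{a, b} \<in> E"
proof -
  have "{f \<in> E. f \<subseteq> {a, b}} \<noteq> {}"
    using assms(4) N unfolding triangles_at_def induced_edges_def by (metis card.empty zero_neq_one)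
  then obtain f where f: "f \<in> E" "f \<subseteq> {a, b}" by blast
  then have "card f = 2" using sg unfolding simple_graph_def by auto
  then have "f = {a, b}" using f(2) \<open>a \<noteq> b\<close> by (simp add: card_subset_eq)
  then show ?thesis using f by simp
qed

definition degree_two_on_triangle :: "'a set \<Rightarrow> 'a set set \<Rightarrow> 'a set" where
  "degree_two_on_triangle V E = {u \<in> V. degree E u = 2 \<and> triangles_at E u = 1}"

lemma degree_two_on_triangle_has_degree_three_neighbor:
  assumes sg: "simple_graph V E" and sc: "subcubic V E" and conn: "connected_graph V E"
    and n: "card V \<ge> 4" and u: "u \<in> degree_two_on_triangle V E"
  obtains x where "x \<in> neighbors E u" "degree E x = 3"
proof (rule ccontr)
  assume no: "\<not> thesis"
  have uV: "u \<in> V" and "card (neighbors E u) = 2"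
    using u unfolding degree_two_on_triangle_def degree_def by auto
  then obtain a b where N: "neighbors E u = {a, b}" and ab: "a \<noteq> b" by (meson card_2_iff)
  have ab_edge: "{a, b} \<in> E"
    using degree_two_triangle_edge[OF sg N ab] u unfolding degree_two_on_triangle_def by simp
  have "u \<noteq> a" "u \<noteq> b" using N notin_neighbors_self[OF sg] by auto
  then have card2: "card {u, b} = 2" "card {u, a} = 2" by auto
  have "a \<in> V" "b \<in> V" using N neighbors_subset[OF sg] by auto
  then have "degree E a \<le> 3" "degree E b \<le> 3" using sc by (auto simp: subcubic_def)
  moreover have "degree E a \<noteq> 3" "degree E b \<noteq> 3" using no that N by blast+
  ultimately have "degree E a \<le> card {u, b}" "degree E b \<le> card {u, a}" using card2 by linarith+
  moreover have "{u, b} \<subseteq> neighbors E a" "{u, a} \<subseteq> neighbors E b"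
    using N ab_edge neighbors_sym by (auto simp: neighbors_def insert_commute)
  ultimately have "neighbors E a = {u, b}" "neighbors E b = {u, a}"
    using neighbors_eqI[OF sg] by blast+
  then have "V \<subseteq> {u, a, b}"
    using N by (intro connected_graph_closed_set[OF conn uV]) auto
  then have "card V \<le> card {u, a, b}" by (simp add: card_mono)
  also have "\<dots> \<le> 3" by (simp add: card_insert_if)
  finally show False using n by simp
qed

lemma card_neighbors_inter_degree_two_on_triangle:
  assumes sg: "simple_graph V E"
  shows "card (neighbors E x \<inter> degree_two_on_triangle V E) \<le> 2 * triangles_at E x"
proof -
  let ?F = "{f \<in> E. f \<subseteq> neighbors E x}"
  have "neighbors E x \<inter> degree_two_on_triangle V E \<subseteq> \<Union>?F"
  proof
    fix u assume u: "u \<in> neighbors E x \<inter> degree_two_on_triangle V E"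
    then have "card (neighbors E u) = 2" "triangles_at E u = 1" "x \<in> neighbors E u"
      using neighbors_sym unfolding degree_two_on_triangle_def degree_def by fast+
    then obtain w where N: "neighbors E u = {x, w}" and "x \<noteq> w"
    proof -
      obtain a b where ab: "neighbors E u = {a, b}" "a \<noteq> b"
        using \<open>card (neighbors E u) = 2\<close> by (meson card_2_iff)
      then consider "x = a" | "x = b" using \<open>x \<in> neighbors E u\<close> by blast
      then show thesis using ab that by cases (auto simp: insert_commute)
    qed
    then have "{x, w} \<in> E" using degree_two_triangle_edge[OF sg] \<open>triangles_at E u = 1\<close> by blast
    then have "{u, w} \<in> ?F" using N u by (auto simp: neighbors_def)
    then show "u \<in> \<Union>?F" by blast
  qed
  moreover have "finite ?F" using finite_edges[OF sg] by simp
  moreover have "\<forall>f\<in>?F. finite f \<and> card f = 2"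
    using sg unfolding simple_graph_def by (auto intro: card_ge_0_finite)
  ultimately have "card (neighbors E x \<inter> degree_two_on_triangle V E) \<le> sum card ?F"
    by (meson card_Union_le_sum_card card_mono finite_Union le_trans)
  also have "\<dots> = 2 * card ?F" using \<open>\<forall>f\<in>?F. finite f \<and> card f = 2\<close> by simp
  finally show ?thesis unfolding triangles_at_def induced_edges_def .
qed

text \<open>Double counting of the pairs \<open>(u, x)\<close> with \<open>u \<in> A\<close> adjacent to a degree-3 vertex \<open>x\<close>.\<close>

lemma card_degree_two_on_triangle_le:
  assumes sg: "simple_graph V E" and sc: "subcubic V E" and conn: "connected_graph V E"
    and n: "card V \<ge> 4"
  shows "card (degree_two_on_triangle V E) \<le> 2 * (\<Sum>x\<in>{x \<in> V. degree E x = 3}. triangles_at E x)"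
proof -
  let ?A = "degree_two_on_triangle V E" and ?D = "{x \<in> V. degree E x = 3}"
  have fin: "finite ?A" "finite ?D" "finite V"
    using sg unfolding simple_graph_def degree_two_on_triangle_def by auto
  have "card ?A \<le> (\<Sum>u\<in>?A. card (neighbors E u \<inter> ?D))"
  proof -
    have "1 \<le> card (neighbors E u \<inter> ?D)" if u: "u \<in> ?A" for u
    proof -
      obtain x where "x \<in> neighbors E u" "degree E x = 3"
        using degree_two_on_triangle_has_degree_three_neighbor[OF sg sc conn n u] .
      then have "neighbors E u \<inter> ?D \<noteq> {}" using neighbors_subset[OF sg] by auto
      then show ?thesis using finite_neighbors[OF sg, of u] by (simp add: Suc_le_eq card_gt_0_iff)
    qed
    then have "(\<Sum>u\<in>?A. 1) \<le> (\<Sum>u\<in>?A. card (neighbors E u \<inter> ?D))" by (rule sum_mono)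
    then show ?thesis by simp
  qed
  also have "\<dots> = (\<Sum>x\<in>?D. card (neighbors E x \<inter> ?A))"
  proof -
    have "(\<Sum>u\<in>?A. card (neighbors E u \<inter> ?D)) = (\<Sum>u\<in>?A. \<Sum>x\<in>?D. of_bool (x \<in> neighbors E u))"
      using fin by (simp add: Int_commute)
    also have "\<dots> = (\<Sum>x\<in>?D. \<Sum>u\<in>?A. of_bool (x \<in> neighbors E u))"
      by (rule sum.swap)
    also have "\<dots> = (\<Sum>x\<in>?D. \<Sum>u\<in>?A. of_bool (u \<in> neighbors E x))"
      by (simp only: neighbors_sym)
    also have "\<dots> = (\<Sum>x\<in>?D. card (neighbors E x \<inter> ?A))"
      using fin by (simp add: Int_commute)
    finally show ?thesis .
  qed
  also have "\<dots> \<le> (\<Sum>x\<in>?D. 2 * triangles_at E x)"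
    by (intro sum_mono card_neighbors_inter_degree_two_on_triangle[OF sg])
  finally show ?thesis by (simp add: sum_distrib_left)
qed

lemma sum_triangles_at_split:
  assumes sg: "simple_graph V E" and sc: "subcubic V E"
  shows "(\<Sum>v\<in>V. triangles_at E v)
    = (\<Sum>x\<in>{x \<in> V. degree E x = 3}. triangles_at E x) + card (degree_two_on_triangle V E)"
proof -
  have fin: "finite V" using sg unfolding simple_graph_def by simp
  have "triangles_at E v = (if degree E v = 3 then triangles_at E v else 0)
      + of_bool (v \<in> degree_two_on_triangle V E)" if "v \<in> V" for v
  proof -
    have "triangles_at E v \<le> degree E v choose 2" by (rule triangles_at_le_choose[OF sg])
    moreover have "degree E v \<le> 3" using sc that by (simp add: subcubic_def)
    ultimately show ?thesis using that unfolding degree_two_on_triangle_def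
      by (cases "degree E v") (auto simp: numeral_eq_Suc le_Suc_eq)
  qed
  then have "(\<Sum>v\<in>V. triangles_at E v) = (\<Sum>v\<in>V. (if degree E v = 3 then triangles_at E v else 0)
      + of_bool (v \<in> degree_two_on_triangle V E))"
    by (rule sum.cong[OF refl])
  also have "\<dots> = (\<Sum>v\<in>V. (if degree E v = 3 then triangles_at E v else 0))
      + (\<Sum>v\<in>V. of_bool (v \<in> degree_two_on_triangle V E))"
    by (rule sum.distrib)
  also have "\<dots> = (\<Sum>x\<in>{x \<in> V. degree E x = 3}. triangles_at E x) + card (degree_two_on_triangle V E)"
  proof -
    have "V \<inter> {v. v \<in> degree_two_on_triangle V E} = degree_two_on_triangle V E"
      unfolding degree_two_on_triangle_def by blast
    then show ?thesis using fin by (simp add: sum.inter_filter)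
  qed
  finally show ?thesis .
qed

definition clustering_weight :: "'a set set \<Rightarrow> 'a \<Rightarrow> nat" where
  "clustering_weight E u =
     (if degree E u = 2 then 3 * triangles_at E u
      else if degree E u = 3 then triangles_at E u else 0)"

lemma local_clustering_eq_clustering_weight:
  assumes "subcubic V E" "u \<in> V"
  shows "local_clustering E u = real (clustering_weight E u) / 3"
proof -
  have "degree E u \<le> 3" using assms by (simp add: subcubic_def)
  then consider "degree E u < 2" | "degree E u = 2" | "degree E u = 3" by linarith
  then show ?thesis
  proof cases
    case 3
    have "(3::nat) choose 2 = 3" by (simp add: numeral_3_eq_3 numeral_2_eq_2)
    with 3 show ?thesis unfolding local_clustering_def clustering_weight_def triangles_at_def by simp
  qed (auto simp: local_clustering_def clustering_weight_def triangles_at_def)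
qed

lemma clustering_weight_bound:
  assumes sg: "simple_graph V E" and sc: "subcubic V E" and u: "u \<in> V"
  shows "4 * clustering_weight E u + 7 * degree E u
    \<le> 21 + 4 * triangles_at E u + of_bool (u \<in> degree_two_on_triangle V E)"
proof -
  have "triangles_at E u \<le> degree E u choose 2" by (rule triangles_at_le_choose[OF sg])
  moreover have "degree E u \<le> 3" using sc u by (simp add: subcubic_def)
  ultimately show ?thesis using u unfolding clustering_weight_def degree_two_on_triangle_def
    by (cases "degree E u") (auto simp: numeral_eq_Suc le_Suc_eq)
qed

lemma sum_clustering_weight_le:
  assumes sg: "simple_graph V E" and sc: "subcubic V E" and conn: "connected_graph V E"
    and n: "card V \<ge> 5"
  shows "4 * (\<Sum>u\<in>V. clustering_weight E u) \<le> 7 * card V + 14"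
proof -
  let ?A = "degree_two_on_triangle V E" and ?T = "\<Sum>v\<in>V. triangles_at E v"
  have fin: "finite V" using sg unfolding simple_graph_def by simp
  have "(\<Sum>u\<in>V. 4 * clustering_weight E u + 7 * degree E u)
      \<le> (\<Sum>u\<in>V. 21 + 4 * triangles_at E u + of_bool (u \<in> ?A))"
    by (intro sum_mono clustering_weight_bound[OF sg sc])
  moreover have "V \<inter> {u. u \<in> ?A} = ?A" unfolding degree_two_on_triangle_def by blast
  ultimately have "4 * (\<Sum>u\<in>V. clustering_weight E u) + 14 * card E \<le> 21 * card V + 4 * ?T + card ?A"
    using fin sum_degree_eq_twice_card_edges[OF sg]
    by (simp add: sum.distrib sum_distrib_left[symmetric])
  moreover have "3 * card V + ?T \<le> 3 * card E + 3" by (rule sum_triangles_at_le[OF sg sc conn n])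
  moreover have "card ?A \<le> 2 * (\<Sum>x\<in>{x \<in> V. degree E x = 3}. triangles_at E x)"
    using card_degree_two_on_triangle_le[OF sg sc conn] n by simp
  ultimately show ?thesis using sum_triangles_at_split[OF sg sc] by linarith
qed

text \<open>Since \<open>4 K\<close> is a multiple of 4, \<open>4 K \<le> 7 n + 14\<close> sharpens to \<open>4 K \<le> 7 n + c\<close> with
  \<open>c \<in> {12, 13, 14, 11}\<close> chosen so that \<open>7 n + c\<close> is the largest multiple of 4 below \<open>7 n + 14\<close>.\<close>

lemma clustering_bound_of_weight_bound:
  fixes K n :: nat
  assumes K: "4 * K \<le> 7 * n + 14" and n: "0 < n"
  shows "real K / 3 / real n \<le> 7/12 +
    (if n mod 4 = 0 then 12 else if n mod 4 = 1 then 13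
     else if n mod 4 = 2 then 14 else 11) / (12 * real n)"
proof -
  define c :: nat where "c = (if n mod 4 = 0 then 12 else if n mod 4 = 1 then 13
     else if n mod 4 = 2 then 14 else 11)"
  have "n mod 4 < 4" by simp
  then consider "n mod 4 = 0" | "n mod 4 = 1" | "n mod 4 = 2" | "n mod 4 = 3" by linarith
  then have "(7 * n + c) mod 4 = 0"
    unfolding c_def
    by cases (simp_all add: mod_add_left_eq[symmetric, of "7 * n"] mod_mult_right_eq[symmetric, of 7 n])
  moreover have "4 * K \<le> (7 * n + c) + 3" using K unfolding c_def by simp
  moreover have "4 * K \<le> m" if "4 * K \<le> m + 3" "m mod 4 = 0" for m :: nat
    using that by presburger
  ultimately have "4 * real K \<le> 7 * real n + real c" by fastforce
  moreover have "(if n mod 4 = 0 then 12 else if n mod 4 = 1 then 13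
     else if n mod 4 = 2 then 14 else 11) = real c" by (simp add: c_def)
  ultimately show ?thesis using n by (simp add: field_simps)
qed

theorem theorem2:
  fixes V :: "'a set" and E :: "'a set set"
  assumes "simple_graph V E" and "connected_graph V E" and "subcubic V E"
    and "card V \<ge> 6"
  shows "clustering V E \<le> 7/12 +
    (if card V mod 4 = 0 then 12 else if card V mod 4 = 1 then 13
     else if card V mod 4 = 2 then 14 else 11) / (12 * real (card V))"
proof -
  have "(\<Sum>u\<in>V. local_clustering E u) = (\<Sum>u\<in>V. real (clustering_weight E u) / 3)"
    by (intro sum.cong refl local_clustering_eq_clustering_weight[OF assms(3)])
  also have "\<dots> = real (\<Sum>u\<in>V. clustering_weight E u) / 3"
    by (simp add: sum_divide_distrib)
  finally have "clustering V E = real (\<Sum>u\<in>V. clustering_weight E u) / 3 / real (card V)"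
    unfolding clustering_def by (rule arg_cong)
  also have "\<dots> \<le> 7/12 +
    (if card V mod 4 = 0 then 12 else if card V mod 4 = 1 then 13
     else if card V mod 4 = 2 then 14 else 11) / (12 * real (card V))"
    using sum_clustering_weight_le[OF assms(1,3,2)] assms(4)
    by (intro clustering_bound_of_weight_bound) simp_all
  finally show ?thesis .
qed

end
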